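(* Let $X$ be a separable Hilbert space over $K$ with orthonormal basis $\{e_j\}_{j=1,2,\ldots}\cup\{e_i^*\}_{i=1,2,\ldots}$, and let $Z$ be the proper closed subspace of $X$ with orthonormal basis $\{e_j\}$. Let $p:X\to\mathbb{R}$ be a uniformly continuous sub-additive functional with $p(0)=0$, and let $F:Z\to\mathbb{R}$ be a continuous functional with $F(0)=0$ such that $F(z_1)+F(z_2)\le p(z_1+z_2)$ for all orthogonal vectors $z_1,z_2$ lying in the union of the one-dimensional subspaces spanned by the individual $e_j$. Then there exists a continuous functional $\hat F:X\to\mathbb{R}$ with $\hat F(z)=F(z)$ for $z\in Z$ and $\hat F(x_1)+\hat F(x_2)\le p(x_1+x_2)$ for all orthogonal vectors $x_1,x_2$ lying in the union of the one-dimensional subspaces spanned by the individual $e_j$ or $e_i^*$.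
   Context: $K$ is $\mathbb{R}$ or $\mathbb{C}$. A functional $p$ is sub-additive if $p(x+y)\le p(x)+p(y)$ for all $x,y$. *)

theory Defs
  imports "HOL-Analysis.Analysis"
begin

text \<open>We model a complex Hilbert space as a complete real normed vector space together
  with a complex scalar multiplication extending the real one and a complex inner
  product (linear in the first argument, conjugate symmetric) inducing the norm.\<close>

definition complex_hilbert ::
  "(complex \<Rightarrow> 'b::real_normed_vector \<Rightarrow> 'b) \<Rightarrow> ('b \<Rightarrow> 'b \<Rightarrow> complex) \<Rightarrow> bool" where
  "complex_hilbert sc ip \<longleftrightarrow>
     (\<forall>a x y. sc a (x + y) = sc a x + sc a y) \<and>
     (\<forall>a b x. sc (a + b) x = sc a x + sc b x) \<and>
     (\<forall>a b x. sc a (sc b x) = sc (a * b) x) \<and>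
     (\<forall>r x. sc (complex_of_real r) x = r *\<^sub>R x) \<and>
     (\<forall>x y z. ip (x + y) z = ip x z + ip y z) \<and>
     (\<forall>a x y. ip (sc a x) y = a * ip x y) \<and>
     (\<forall>x y. ip y x = cnj (ip x y)) \<and>
     (\<forall>x. ip x x = complex_of_real ((norm x)\<^sup>2))"

definition cspan :: "(complex \<Rightarrow> 'b \<Rightarrow> 'b) \<Rightarrow> 'b::comm_monoid_add set \<Rightarrow> 'b set" where
  "cspan sc S = {x. \<exists>T c. finite T \<and> T \<subseteq> S \<and> x = (\<Sum>v\<in>T. sc (c v) v)}"


end

theory Submission
  imports Defs
begin

text \<open>Put \<open>G = F\<close> on the closed span \<open>Z\<close> of the \<open>e\<^sub>j\<close> and \<open>G y = - p (- y)\<close> on the lines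
  \<open>W\<close> spanned by the \<open>e\<^sub>i\<^sup>*\<close>. Since \<open>Z\<close> is orthogonal to \<open>W\<close>, the closed sets \<open>Z\<close> and
  \<open>closure W\<close> meet only in \<open>0\<close>, where both prescriptions vanish, so Tietze's theorem extends
  \<open>G\<close> continuously to all of \<open>X\<close>. Pairs of vectors on the lines of \<open>Z\<close> are covered by the
  hypothesis on \<open>F\<close>, which with \<open>z\<^sub>2 = 0\<close> also gives \<open>F \<le> p\<close> there; every other pair involves
  \<open>W\<close>, and then the inequality follows from subadditivity and \<open>p 0 = 0\<close>:
  \<open>p z - p (- y) \<le> p (z + y)\<close> and \<open>- p (- y\<^sub>1) - p (- y\<^sub>2) \<le> - p (- y\<^sub>1 - y\<^sub>2) \<le> p (y\<^sub>1 + y\<^sub>2)\<close>.\<close>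

lemma continuous_extension_closed_Un:
  fixes f g :: "'a::metric_space \<Rightarrow> real"
  assumes S: "closed S" and T: "closed T" and f: "continuous_on S f" and g: "continuous_on T g"
    and agree: "\<And>x. x \<in> S \<inter> T \<Longrightarrow> f x = g x"
  obtains h where "continuous_on UNIV h" "\<And>x. x \<in> S \<Longrightarrow> h x = f x" "\<And>x. x \<in> T \<Longrightarrow> h x = g x"
proof -
  define k where "k x = (if x \<in> S then f x else g x)" for x
  have "continuous_on (S \<union> T) k"
  proof (rule continuous_on_closed_Un[OF S T])
    show "continuous_on S k" using f by (rule continuous_on_eq) (simp add: k_def)
    show "continuous_on T k" using g by (rule continuous_on_eq) (simp add: k_def agree)
  qed
  moreover have "normal_space (euclidean :: 'a topology)"
    by (simp add: metrizable_imp_normal_space metrizable_space_euclidean)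
  ultimately obtain h where "continuous_map euclidean euclideanreal h" "\<And>x. x \<in> S \<union> T \<Longrightarrow> h x = k x"
    using Tietze_extension_realinterval[of euclidean "S \<union> T" UNIV k] S T by auto
  then show ?thesis
    using that by (simp add: k_def agree)
qed

lemma subadditive_reflection_le:
  fixes p :: "'a::ab_group_add \<Rightarrow> real"
  assumes sub: "\<forall>x y. p (x + y) \<le> p x + p y"
  shows "p a - p (- b) \<le> p (a + b)"
    and "p 0 = 0 \<Longrightarrow> - p (- a) - p (- b) \<le> p (a + b)"
proof -
  show "p a - p (- b) \<le> p (a + b)"
    using sub[rule_format, of "a + b" "- b"] by simp
  assume "p 0 = 0"
  then show "- p (- a) - p (- b) \<le> p (a + b)"
    using sub[rule_format, of "a + b" "- (a + b)"] sub[rule_format, of "- a" "- b"]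
    by (simp add: add.commute)
qed

lemma closure_span_orthogonal_Int:
  fixes S T :: "'a::real_inner set"
  assumes ST: "\<forall>s\<in>S. \<forall>t\<in>T. inner s t = 0"
  shows "closure (span S) \<inter> closure (span T) \<subseteq> {0}"
proof
  have perp: "closure (span A) \<subseteq> {x. inner y x = 0}" if "\<forall>a\<in>A. inner y a = 0" for A y
  proof (rule closure_minimal[OF span_minimal closed_hyperplane])
    show "A \<subseteq> {x. inner y x = 0}" using that by auto
    show "subspace {x. inner y x = 0}" by (auto simp: subspace_def inner_add_right)
  qed
  fix x assume x: "x \<in> closure (span S) \<inter> closure (span T)"
  have "\<forall>t\<in>T. inner x t = 0"
    using perp[of S] x ST by (force simp: inner_commute)
  then have "inner x x = 0" using perp[of T x] x by blast
  then show "x \<in> {0}" by simp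
qed

lemma continuous_extension_dominated_on_pairs:
  fixes F p :: "'a::real_normed_vector \<Rightarrow> real" and orth :: "'a \<Rightarrow> 'a \<Rightarrow> bool"
  assumes Z: "closed Z" and LZ: "L \<subseteq> Z" and ZW: "Z \<inter> closure W \<subseteq> {0}"
    and L0: "0 \<in> L" "\<forall>a\<in>L. orth a 0"
    and F: "continuous_on Z F" "F 0 = 0"
    and p: "continuous_on UNIV p" "\<forall>x y. p (x + y) \<le> p x + p y" "p 0 = 0"
    and FL: "\<forall>a\<in>L. \<forall>b\<in>L. orth a b \<longrightarrow> F a + F b \<le> p (a + b)"
  obtains Fh where "continuous_on UNIV Fh" "\<forall>z\<in>Z. Fh z = F z"
    "\<forall>a\<in>L \<union> W. \<forall>b\<in>L \<union> W. orth a b \<longrightarrow> Fh a + Fh b \<le> p (a + b)"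
proof -
  have reflected: "continuous_on (closure W) (\<lambda>y. - p (- y))"
    by (intro continuous_intros continuous_on_compose2[OF p(1)]) auto
  have agree: "F x = - p (- x)" if "x \<in> Z \<inter> closure W" for x
    using that ZW F(2) p(3) by auto
  obtain Fh where Fh: "continuous_on UNIV Fh" "\<And>z. z \<in> Z \<Longrightarrow> Fh z = F z"
      "\<And>y. y \<in> closure W \<Longrightarrow> Fh y = - p (- y)"
    using continuous_extension_closed_Un[OF Z closed_closure F(1) reflected agree] by blast
  have FhL: "Fh a \<le> p a" if "a \<in> L" for a
  proof -
    have "F a + F 0 \<le> p (a + 0)" using FL L0 that by blast
    then show ?thesis using that LZ F(2) Fh(2) by auto
  qed
  have FhW: "Fh y = - p (- y)" if "y \<in> W" for y
    using Fh(3) closure_subset that by blast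
  have mixed: "Fh a + Fh b \<le> p (a + b)" if "a \<in> L" "b \<in> W" for a b
    using FhL[of a] FhW[of b] subadditive_reflection_le(1)[OF p(2), of a b] that by simp
  show ?thesis
  proof (rule that[OF Fh(1)])
    show "\<forall>z\<in>Z. Fh z = F z" using Fh(2) by blast
    show "\<forall>a\<in>L \<union> W. \<forall>b\<in>L \<union> W. orth a b \<longrightarrow> Fh a + Fh b \<le> p (a + b)"
    proof (intro ballI impI)
      fix a b assume a: "a \<in> L \<union> W" and b: "b \<in> L \<union> W" and ab: "orth a b"
      consider "a \<in> L" "b \<in> L" | "a \<in> L" "b \<in> W" | "a \<in> W" "b \<in> L" | "a \<in> W" "b \<in> W"
        using a b by blast
      then show "Fh a + Fh b \<le> p (a + b)"
      proof cases
        case 1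
        then have "F a + F b \<le> p (a + b)" using FL ab by blast
        then show ?thesis using 1 LZ Fh(2) by (simp add: subset_iff)
      next
        case 2
        then show ?thesis by (rule mixed)
      next
        case 3
        then show ?thesis using mixed[of b a] by (simp add: add.commute)
      next
        case 4
        then show ?thesis using FhW subadditive_reflection_le(2)[OF p(2,3), of a b] by simp
      qed
    qed
  qed
qed

lemma extension_real_hilbert:
  fixes e e' :: "nat \<Rightarrow> 'a::real_inner" and p F :: "'a \<Rightarrow> real"
  assumes disj: "range e \<inter> range e' = {}"
    and on: "\<forall>u\<in>range e \<union> range e'. \<forall>v\<in>range e \<union> range e'. inner u v = (if u = v then 1 else 0)"
    and uc: "uniformly_continuous_on UNIV p" and sub: "\<forall>x y. p (x + y) \<le> p x + p y" and p0: "p 0 = 0"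
    and Fc: "continuous_on (closure (span (range e))) F" and F0: "F 0 = 0"
    and hyp: "\<forall>z1\<in>(\<Union>j. range (\<lambda>c. c *\<^sub>R e j)). \<forall>z2\<in>(\<Union>j. range (\<lambda>c. c *\<^sub>R e j)).
          inner z1 z2 = 0 \<longrightarrow> F z1 + F z2 \<le> p (z1 + z2)"
  shows "\<exists>Fh :: 'a \<Rightarrow> real. continuous_on UNIV Fh \<and>
            (\<forall>z\<in>closure (span (range e)). Fh z = F z) \<and>
            (\<forall>x1\<in>(\<Union>j. range (\<lambda>c. c *\<^sub>R e j)) \<union> (\<Union>i. range (\<lambda>c. c *\<^sub>R e' i)).
             \<forall>x2\<in>(\<Union>j. range (\<lambda>c. c *\<^sub>R e j)) \<union> (\<Union>i. range (\<lambda>c. c *\<^sub>R e' i)).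
               inner x1 x2 = 0 \<longrightarrow> Fh x1 + Fh x2 \<le> p (x1 + x2))"
proof -
  have lines_in_span: "(\<Union>j. range (\<lambda>c. c *\<^sub>R f j)) \<subseteq> span (range f)" for f :: "nat \<Rightarrow> 'a"
    by (auto intro: span_mul span_base)
  have "\<forall>s\<in>range e. \<forall>t\<in>range e'. inner s t = 0"
    using disj on by fastforce
  then have ZW: "closure (span (range e)) \<inter> closure (\<Union>i. range (\<lambda>c. c *\<^sub>R e' i)) \<subseteq> {0}"
    using closure_span_orthogonal_Int closure_mono[OF lines_in_span] by blast
  have L0: "0 \<in> (\<Union>j. range (\<lambda>c. c *\<^sub>R e j))" by (auto intro!: exI[of _ 0] image_eqI[of _ _ 0])
  have LZ: "(\<Union>j. range (\<lambda>c. c *\<^sub>R e j)) \<subseteq> closure (span (range e))"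
    using lines_in_span closure_subset by blast
  obtain Fh where Fh: "continuous_on UNIV Fh" "\<forall>z\<in>closure (span (range e)). Fh z = F z"
    "\<forall>a\<in>(\<Union>j. range (\<lambda>c. c *\<^sub>R e j)) \<union> (\<Union>i. range (\<lambda>c. c *\<^sub>R e' i)).
     \<forall>b\<in>(\<Union>j. range (\<lambda>c. c *\<^sub>R e j)) \<union> (\<Union>i. range (\<lambda>c. c *\<^sub>R e' i)).
       inner a b = 0 \<longrightarrow> Fh a + Fh b \<le> p (a + b)"
    by (rule continuous_extension_dominated_on_pairs[OF closed_closure LZ ZW L0 _ Fc F0
          uniformly_continuous_imp_continuous[OF uc] sub p0 hyp]) simp
  show ?thesis
    by (intro exI[of _ Fh] conjI Fh)
qed

context
  fixes sc :: "complex \<Rightarrow> 'b::real_normed_vector \<Rightarrow> 'b" and ip :: "'b \<Rightarrow> 'b \<Rightarrow> complex"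
  assumes hilbert: "complex_hilbert sc ip"
begin

lemma ip_add_left: "ip (x + y) z = ip x z + ip y z"
  and ip_scale_left: "ip (sc a x) y = a * ip x y"
  and ip_cnj: "ip y x = cnj (ip x y)"
  and ip_self: "ip x x = complex_of_real ((norm x)\<^sup>2)"
  and sc_of_real: "sc (complex_of_real r) x = r *\<^sub>R x"
  using hilbert unfolding complex_hilbert_def by blast+

lemma ip_add_right: "ip x (y + z) = ip x y + ip x z"
  by (metis ip_cnj ip_add_left complex_cnj_add)

lemma ip_scale_right: "ip x (sc a y) = cnj a * ip x y"
  by (metis ip_cnj ip_scale_left complex_cnj_mult)

lemma ip_zero_left [simp]: "ip 0 y = 0"
  using ip_add_left[of 0 0 y] by simp

lemma ip_zero_right [simp]: "ip y 0 = 0"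
  by (metis ip_cnj ip_zero_left complex_cnj_zero)

lemma sc_zero [simp]: "sc 0 x = 0"
  using sc_of_real[of 0 x] by simp

lemma ip_self_eq_0_iff [simp]: "ip x x = 0 \<longleftrightarrow> x = 0"
  by (simp add: ip_self)

lemma Re_ip_polarization: "Re (ip x y) = ((norm (x + y))\<^sup>2 - (norm x)\<^sup>2 - (norm y)\<^sup>2) / 2"
proof -
  have "ip (x + y) (x + y) = ip x x + ip x y + ip y x + ip y y"
    by (simp add: ip_add_left ip_add_right)
  then have "(norm (x + y))\<^sup>2 = (norm x)\<^sup>2 + Re (ip x y) + Re (ip y x) + (norm y)\<^sup>2"
    by (metis ip_self Re_complex_of_real plus_complex.sel(1))
  moreover have "Re (ip y x) = Re (ip x y)" by (subst ip_cnj) simp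
  ultimately show ?thesis by simp
qed

lemma closed_ip_orthogonal: "closed {y. ip y x = 0}"
proof -
  have closed_Re: "closed {y. Re (ip y z) = 0}" for z
    unfolding Re_ip_polarization by (intro closed_Collect_eq continuous_intros) auto
  have "{y. ip y x = 0} = {y. Re (ip y x) = 0} \<inter> {y. Re (ip y (sc \<i> x)) = 0}"
    by (auto simp: ip_scale_right complex_eq_iff)
  then show ?thesis using closed_Re by (metis closed_Int)
qed

lemma ip_sum_left: "finite T \<Longrightarrow> ip (\<Sum>v\<in>T. sc (c v) v) w = (\<Sum>v\<in>T. c v * ip v w)"
  by (induction T rule: finite_induct) (auto simp: ip_add_left ip_scale_left)

lemma sc_in_cspan: "v \<in> S \<Longrightarrow> sc c v \<in> cspan sc S"
  unfolding cspan_def by (auto intro!: exI[of _ "{v}"] exI[of _ "\<lambda>_. c"])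

lemma closure_cspan_orthogonal_Int:
  assumes ST: "\<forall>s\<in>S. \<forall>t\<in>T. ip s t = 0"
  shows "closure (cspan sc S) \<inter> closure (cspan sc T) \<subseteq> {0}"
proof
  have perp: "closure (cspan sc A) \<subseteq> {x. ip x y = 0}" if A: "\<forall>a\<in>A. ip a y = 0" for A y
  proof (rule closure_minimal[OF _ closed_ip_orthogonal], rule subsetI)
    fix x assume "x \<in> cspan sc A"
    then obtain B c where B: "finite B" "B \<subseteq> A" "x = (\<Sum>v\<in>B. sc (c v) v)"
      unfolding cspan_def by blast
    then have "ip x y = (\<Sum>v\<in>B. c v * ip v y)" by (simp add: ip_sum_left)
    also have "\<dots> = 0" using B(2) A by (intro sum.neutral) auto
    finally show "x \<in> {x. ip x y = 0}" by simp
  qed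
  fix x assume x: "x \<in> closure (cspan sc S) \<inter> closure (cspan sc T)"
  have "\<forall>t\<in>T. ip t x = 0"
  proof
    fix t assume "t \<in> T"
    then have "ip x t = 0" using perp[of S t] ST x by blast
    then show "ip t x = 0" by (subst ip_cnj) simp
  qed
  then have "ip x x = 0" using perp[of T x] x by blast
  then show "x \<in> {0}" by simp
qed

lemma extension_complex_hilbert:
  fixes e e' :: "nat \<Rightarrow> 'b" and p F :: "'b \<Rightarrow> real"
  assumes disj: "range e \<inter> range e' = {}"
    and on: "\<forall>u\<in>range e \<union> range e'. \<forall>v\<in>range e \<union> range e'. ip u v = (if u = v then 1 else 0)"
    and uc: "uniformly_continuous_on UNIV p" and sub: "\<forall>x y. p (x + y) \<le> p x + p y" and p0: "p 0 = 0"
    and Fc: "continuous_on (closure (cspan sc (range e))) F" and F0: "F 0 = 0"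
    and hyp: "\<forall>z1\<in>(\<Union>j. range (\<lambda>c. sc c (e j))). \<forall>z2\<in>(\<Union>j. range (\<lambda>c. sc c (e j))).
          ip z1 z2 = 0 \<longrightarrow> F z1 + F z2 \<le> p (z1 + z2)"
  shows "\<exists>Fh :: 'b \<Rightarrow> real. continuous_on UNIV Fh \<and>
            (\<forall>z\<in>closure (cspan sc (range e)). Fh z = F z) \<and>
            (\<forall>x1\<in>(\<Union>j. range (\<lambda>c. sc c (e j))) \<union> (\<Union>i. range (\<lambda>c. sc c (e' i))).
             \<forall>x2\<in>(\<Union>j. range (\<lambda>c. sc c (e j))) \<union> (\<Union>i. range (\<lambda>c. sc c (e' i))).
               ip x1 x2 = 0 \<longrightarrow> Fh x1 + Fh x2 \<le> p (x1 + x2))"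
proof -
  have lines_in_cspan: "(\<Union>j. range (\<lambda>c. sc c (f j))) \<subseteq> cspan sc (range f)" for f :: "nat \<Rightarrow> 'b"
    by (auto intro: sc_in_cspan)
  have "\<forall>s\<in>range e. \<forall>t\<in>range e'. ip s t = 0"
    using disj on by fastforce
  then have ZW: "closure (cspan sc (range e)) \<inter> closure (\<Union>i. range (\<lambda>c. sc c (e' i))) \<subseteq> {0}"
    using closure_cspan_orthogonal_Int closure_mono[OF lines_in_cspan] by blast
  have L0: "0 \<in> (\<Union>j. range (\<lambda>c. sc c (e j)))"
    by (auto intro!: exI[of _ 0] image_eqI[of _ _ 0])
  have LZ: "(\<Union>j. range (\<lambda>c. sc c (e j))) \<subseteq> closure (cspan sc (range e))"
    using lines_in_cspan closure_subset by blast
  obtain Fh where Fh: "continuous_on UNIV Fh" "\<forall>z\<in>closure (cspan sc (range e)). Fh z = F z"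
    "\<forall>a\<in>(\<Union>j. range (\<lambda>c. sc c (e j))) \<union> (\<Union>i. range (\<lambda>c. sc c (e' i))).
     \<forall>b\<in>(\<Union>j. range (\<lambda>c. sc c (e j))) \<union> (\<Union>i. range (\<lambda>c. sc c (e' i))).
       ip a b = 0 \<longrightarrow> Fh a + Fh b \<le> p (a + b)"
    by (rule continuous_extension_dominated_on_pairs[OF closed_closure LZ ZW L0 _ Fc F0
          uniformly_continuous_imp_continuous[OF uc] sub p0 hyp]) simp
  show ?thesis
    by (intro exI[of _ Fh] conjI Fh)
qed

end

theorem theorem5:
  shows
  \<comment> \<open>Case K = real\<close>
  "(\<forall>(e :: nat \<Rightarrow> 'a::{real_inner,complete_space}) (e' :: nat \<Rightarrow> 'a) (p :: 'a \<Rightarrow> real) (F :: 'a \<Rightarrow> real).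
      inj e \<and> inj e' \<and> range e \<inter> range e' = {} \<and>
      (\<forall>u\<in>range e \<union> range e'. \<forall>v\<in>range e \<union> range e'. inner u v = (if u = v then 1 else 0)) \<and>
      closure (span (range e \<union> range e')) = UNIV \<and>
      uniformly_continuous_on UNIV p \<and> (\<forall>x y. p (x + y) \<le> p x + p y) \<and> p 0 = 0 \<and>
      continuous_on (closure (span (range e))) F \<and> F 0 = 0 \<and>
      (\<forall>z1\<in>(\<Union>j. range (\<lambda>c. c *\<^sub>R e j)). \<forall>z2\<in>(\<Union>j. range (\<lambda>c. c *\<^sub>R e j)).
          inner z1 z2 = 0 \<longrightarrow> F z1 + F z2 \<le> p (z1 + z2))
      \<longrightarrow> (\<exists>Fh :: 'a \<Rightarrow> real. continuous_on UNIV Fh \<and>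
            (\<forall>z\<in>closure (span (range e)). Fh z = F z) \<and>
            (\<forall>x1\<in>(\<Union>j. range (\<lambda>c. c *\<^sub>R e j)) \<union> (\<Union>i. range (\<lambda>c. c *\<^sub>R e' i)).
             \<forall>x2\<in>(\<Union>j. range (\<lambda>c. c *\<^sub>R e j)) \<union> (\<Union>i. range (\<lambda>c. c *\<^sub>R e' i)).
               inner x1 x2 = 0 \<longrightarrow> Fh x1 + Fh x2 \<le> p (x1 + x2))))
   \<and>
  \<comment> \<open>Case K = complex\<close>
   (\<forall>sc ip (e :: nat \<Rightarrow> 'b::{real_normed_vector,complete_space}) (e' :: nat \<Rightarrow> 'b) (p :: 'b \<Rightarrow> real) (F :: 'b \<Rightarrow> real).
      complex_hilbert sc ip \<and>
      inj e \<and> inj e' \<and> range e \<inter> range e' = {} \<and>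
      (\<forall>u\<in>range e \<union> range e'. \<forall>v\<in>range e \<union> range e'. ip u v = (if u = v then 1 else 0)) \<and>
      closure (cspan sc (range e \<union> range e')) = UNIV \<and>
      uniformly_continuous_on UNIV p \<and> (\<forall>x y. p (x + y) \<le> p x + p y) \<and> p 0 = 0 \<and>
      continuous_on (closure (cspan sc (range e))) F \<and> F 0 = 0 \<and>
      (\<forall>z1\<in>(\<Union>j. range (\<lambda>c. sc c (e j))). \<forall>z2\<in>(\<Union>j. range (\<lambda>c. sc c (e j))).
          ip z1 z2 = 0 \<longrightarrow> F z1 + F z2 \<le> p (z1 + z2))
      \<longrightarrow> (\<exists>Fh :: 'b \<Rightarrow> real. continuous_on UNIV Fh \<and>
            (\<forall>z\<in>closure (cspan sc (range e)). Fh z = F z) \<and>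
            (\<forall>x1\<in>(\<Union>j. range (\<lambda>c. sc c (e j))) \<union> (\<Union>i. range (\<lambda>c. sc c (e' i))).
             \<forall>x2\<in>(\<Union>j. range (\<lambda>c. sc c (e j))) \<union> (\<Union>i. range (\<lambda>c. sc c (e' i))).
               ip x1 x2 = 0 \<longrightarrow> Fh x1 + Fh x2 \<le> p (x1 + x2))))"
  by (intro conjI allI impI; elim conjE;
      rule extension_real_hilbert extension_complex_hilbert; assumption)

end
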